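(* Let $R$ be an associative ring with identity and $a,b,c,d\in R$ such that both $a^{\|(b,c)}$ and $d^{\|(b,c)}$ exist. Then the following are equivalent: (i) $aa^{\|(b,c)}=dd^{\|(b,c)}$; (ii) $aa^{\|(b,c)}dd^{\|(b,c)}=dd^{\|(b,c)}aa^{\|(b,c)}$; (iii) $ad^{\|(b,c)}da^{\|(b,c)}=da^{\|(b,c)}ad^{\|(b,c)}$; (iv) $ad^{\|(b,c)}$ is group invertible and $(ad^{\|(b,c)})^{\#}=da^{\|(b,c)}$; (v) $da^{\|(b,c)}$ is group invertible and $(da^{\|(b,c)})^{\#}=ad^{\|(b,c)}$.
   Context: For $a,b,c\in R$, $a$ is $(b,c)$-invertible if there exists $y\in R$ with $y\in (bRy)\cap(yRc)$, $yab=b$ and $cay=c$; such $y$ is unique and denoted $a^{\|(b,c)}$. An element $x\in R$ is group invertible if there is $z\in R$ with $xzx=x$, $zxz=z$, $xz=zx$; such $z$ is unique and denoted $x^{\#}$. *)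

theory Defs
  imports Main
begin

definition is_bc_inverse :: "'a::ring_1 \<Rightarrow> 'a \<Rightarrow> 'a \<Rightarrow> 'a \<Rightarrow> bool" where
  "is_bc_inverse a b c y \<longleftrightarrow>
     (\<exists>r. y = b * r * y) \<and> (\<exists>s. y = y * s * c) \<and> y * a * b = b \<and> c * a * y = c"

definition bc_invertible :: "'a::ring_1 \<Rightarrow> 'a \<Rightarrow> 'a \<Rightarrow> bool" where
  "bc_invertible a b c \<longleftrightarrow> (\<exists>y. is_bc_inverse a b c y)"

definition bc_inv :: "'a::ring_1 \<Rightarrow> 'a \<Rightarrow> 'a \<Rightarrow> 'a" where
  "bc_inv a b c = (THE y. is_bc_inverse a b c y)"

definition is_group_inverse :: "'a::ring_1 \<Rightarrow> 'a \<Rightarrow> bool" where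
  "is_group_inverse x z \<longleftrightarrow> x * z * x = x \<and> z * x * z = z \<and> x * z = z * x"

definition group_invertible :: "'a::ring_1 \<Rightarrow> bool" where
  "group_invertible x \<longleftrightarrow> (\<exists>z. is_group_inverse x z)"

definition group_inv :: "'a::ring_1 \<Rightarrow> 'a" where
  "group_inv x = (THE z. is_group_inverse x z)"

end

theory Submission
  imports Defs
begin

text \<open>Let y and z be the (b,c)-inverses of a and d. From y \<in> bRy, yab = b and y \<in> yRc,
  cdz = c one gets yaz = z and ydz = y (and symmetrically). Hence p = ay and q = dz are
  idempotents with pq = p and qp = q, so they commute only if they are equal; and X = az,
  Y = dy satisfy XY = p, YX = q, XYX = X, YXY = Y, so Y is the group inverse of X exactly
  when p = q.\<close>

lemma bc_inverse_absorb_left: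
  fixes a b c d y z :: "'a::ring_1"
  assumes "is_bc_inverse a b c y" and "is_bc_inverse d b c z"
  shows "y * a * z = z"
proof -
  obtain r where r: "z = b * r * z" using assms(2) unfolding is_bc_inverse_def by blast
  have "y * a * b = b" using assms(1) unfolding is_bc_inverse_def by blast
  then have "y * a * (b * r * z) = b * r * z" by (simp add: mult.assoc[symmetric])
  with r show ?thesis by simp
qed

lemma bc_inverse_absorb_right:
  fixes a b c d y z :: "'a::ring_1"
  assumes "is_bc_inverse a b c y" and "is_bc_inverse d b c z"
  shows "y * d * z = y"
proof -
  obtain s where s: "y = y * s * c" using assms(1) unfolding is_bc_inverse_def by blast
  have "c * d * z = c" using assms(2) unfolding is_bc_inverse_def by blast
  then have "y * s * c * d * z = y * s * c" by (simp add: mult.assoc)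
  with s show ?thesis by simp
qed

lemma is_bc_inverse_unique:
  fixes a b c y z :: "'a::ring_1"
  assumes "is_bc_inverse a b c y" and "is_bc_inverse a b c z"
  shows "y = z"
  using bc_inverse_absorb_left[OF assms(1,2)] bc_inverse_absorb_right[OF assms(1,2)] by simp

lemma bc_inv_is_bc_inverse:
  assumes "bc_invertible a b c"
  shows "is_bc_inverse a b c (bc_inv a b c)"
proof -
  obtain y where y: "is_bc_inverse a b c y" using assms unfolding bc_invertible_def by blast
  then show ?thesis unfolding bc_inv_def by (rule theI) (erule is_bc_inverse_unique[OF _ y])
qed

lemma is_group_inverse_unique:
  fixes x z w :: "'a::ring_1"
  assumes "is_group_inverse x z" and "is_group_inverse x w"
  shows "z = w"
proof -
  have z: "x * z * x = x" "z * x * z = z" "x * z = z * x"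
    and w: "x * w * x = x" "w * x * w = w" "x * w = w * x"
    using assms unfolding is_group_inverse_def by auto
  have xz_eq_xw: "x * z = x * w"
  proof -
    have "x * z = x * w * (x * z)" using w(1) by (metis mult.assoc)
    also have "\<dots> = w * (x * z * x)" using w(3) z(3) by (metis mult.assoc)
    also have "\<dots> = x * w" using z(1) w(3) by simp
    finally show ?thesis .
  qed
  have "z = x * z * z" using z(2,3) by simp
  also have "\<dots> = w * (x * z)" using xz_eq_xw w(3) by (simp add: mult.assoc)
  also have "\<dots> = w" using xz_eq_xw w(2) by (simp add: mult.assoc)
  finally show ?thesis .
qed

lemma group_inv_eq_iff:
  fixes x z :: "'a::ring_1"
  shows "group_invertible x \<and> group_inv x = z \<longleftrightarrow> is_group_inverse x z"
proof
  assume "group_invertible x \<and> group_inv x = z"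
  then obtain w where w: "is_group_inverse x w" and "group_inv x = z"
    unfolding group_invertible_def by blast
  moreover have "is_group_inverse x (group_inv x)"
    unfolding group_inv_def using w by (rule theI) (rule is_group_inverse_unique[OF _ w])
  ultimately show "is_group_inverse x z" by simp
next
  assume "is_group_inverse x z"
  then show "group_invertible x \<and> group_inv x = z"
    unfolding group_invertible_def group_inv_def
    by (blast intro: the_equality is_group_inverse_unique)
qed

lemma bc_inverse_products:
  fixes a b c d y z :: "'a::ring_1"
  assumes "is_bc_inverse a b c y" and "is_bc_inverse d b c z"
  shows "a * y * (d * z) = a * y"
    and "a * z * (d * y) = a * y"
    and "a * z * (d * y) * (a * z) = a * z"
proof -
  have yaz: "y * a * z = z" by (rule bc_inverse_absorb_left[OF assms])
  have ydz: "y * d * z = y" by (rule bc_inverse_absorb_right[OF assms])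
  have zdy: "z * d * y = y" by (rule bc_inverse_absorb_left[OF assms(2,1)])
  show "a * y * (d * z) = a * y" using ydz by (simp add: mult.assoc)
  show xy: "a * z * (d * y) = a * y" using zdy by (simp add: mult.assoc)
  show "a * z * (d * y) * (a * z) = a * z" using xy yaz by (simp add: mult.assoc)
qed

lemma is_group_inverse_bc_products_iff:
  fixes a b c d y z :: "'a::ring_1"
  assumes "is_bc_inverse a b c y" and "is_bc_inverse d b c z"
  shows "is_group_inverse (a * z) (d * y) \<longleftrightarrow> a * y = d * z"
  using bc_inverse_products[OF assms] bc_inverse_products[OF assms(2,1)]
  unfolding is_group_inverse_def by auto

theorem theorem4p2:
  fixes a b c d :: "'a::ring_1"
  assumes "bc_invertible a b c" and "bc_invertible d b c"
  defines "ai \<equiv> bc_inv a b c" and "di \<equiv> bc_inv d b c"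
  shows "(a * ai = d * di
           \<longleftrightarrow> a * ai * (d * di) = d * di * (a * ai))
       \<and> (a * ai = d * di
           \<longleftrightarrow> a * di * (d * ai) = d * ai * (a * di))
       \<and> (a * ai = d * di
           \<longleftrightarrow> group_invertible (a * di) \<and> group_inv (a * di) = d * ai)
       \<and> (a * ai = d * di
           \<longleftrightarrow> group_invertible (d * ai) \<and> group_inv (d * ai) = a * di)"
proof -
  have ai: "is_bc_inverse a b c ai" unfolding ai_def by (rule bc_inv_is_bc_inverse[OF assms(1)])
  have di: "is_bc_inverse d b c di" unfolding di_def by (rule bc_inv_is_bc_inverse[OF assms(2)])
  note products = bc_inverse_products[OF ai di] bc_inverse_products[OF di ai]
  have "group_invertible (a * di) \<and> group_inv (a * di) = d * ai \<longleftrightarrow> a * ai = d * di"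
    using group_inv_eq_iff is_group_inverse_bc_products_iff[OF ai di] by blast
  moreover have "group_invertible (d * ai) \<and> group_inv (d * ai) = a * di \<longleftrightarrow> a * ai = d * di"
    using group_inv_eq_iff is_group_inverse_bc_products_iff[OF di ai] by auto
  ultimately show ?thesis using products by auto
qed

end
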